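(* Let $q\in\{2,4\}$, let $n,\kappa,d$ be positive integers with $1\le\kappa<n$, let $\ell=\lceil\log_q 2(n-\kappa+1)\rceil$, and assume $n-\kappa-1\ge 2\ell$. Then there exists a $\kappa$-WMU code $\mathcal{C}\subseteq\mathbb{F}_q^n$ with minimum Hamming distance $d$ and \[ |\mathcal{C}|\ge c_q\,\frac{q^n}{(n-\kappa+1)(\mathcal{L}_0-\mathcal{L}_1-\mathcal{L}_2)},\qquad c_q=\frac{(q-1)^2(2q-1)}{4q^4}, \] where \[ \mathcal{L}_0=\mathcal{V}_q(n-\ell-1,d-1)+(q-2)\mathcal{V}_q(n-\ell-1,d-2), \] \[ \mathcal{L}_1=(q-1)\sum_{i=\ell+2}^{n-\kappa-\ell+1}\sum_{j=0}^{i-\ell-2}\binom{i-\ell-2}{j}(q-2)^j\,\mathcal{V}_q(n-i-\ell+1,d-\ell-j-2), \] \[ \mathcal{L}_2=\sum_{i=0}^{n-\kappa-\ell}\binom{n-\kappa-\ell}{i}(q-2)^i\,\mathcal{V}_q(\kappa-1,d-i-2). \]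
   Context: $\mathbb{F}_q$ is the finite field with $q$ elements. $\mathcal{V}_q(m,r)=\sum_{i=0}^{r}\binom{m}{i}(q-1)^i$ is the size of a Hamming ball of radius $r$ in $\mathbb{F}_q^m$ (an empty sum, i.e. $r<0$, equals $0$); $0^0=1$. A code $\mathcal{C}\subseteq\mathbb{F}_q^n$ is $\kappa$-WMU ($1\le\kappa<n$) if for all not necessarily distinct $\mathbf{a},\mathbf{b}\in\mathcal{C}$ and all $\kappa\le l<n$, $(a_1,\dots,a_l)\ne(b_{n-l+1},\dots,b_n)$. The minimum Hamming distance of a code is the least number of coordinates in which two distinct codewords differ. *)

theory Defs
  imports Complex_Main
begin

text \<open>Words of \<open>\<bbbF>\<^sub>q\<^sup>n\<close> are lists of length n over a finite field type.\<close>

definition hamming_dist :: "'a list \<Rightarrow> 'a list \<Rightarrow> nat" where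
  "hamming_dist a b = card {i. i < length a \<and> a ! i \<noteq> b ! i}"

definition min_dist_ge :: "'a list set \<Rightarrow> nat \<Rightarrow> bool" where
  "min_dist_ge C d \<longleftrightarrow> (\<forall>a\<in>C. \<forall>b\<in>C. a \<noteq> b \<longrightarrow> d \<le> hamming_dist a b)"

definition is_WMU :: "nat \<Rightarrow> nat \<Rightarrow> 'a list set \<Rightarrow> bool" where
  "is_WMU \<kappa> n C \<longleftrightarrow> (\<forall>a\<in>C. \<forall>b\<in>C. \<forall>l. \<kappa> \<le> l \<and> l < n \<longrightarrow> take l a \<noteq> drop (n - l) b)"

definition vol :: "nat \<Rightarrow> nat \<Rightarrow> int \<Rightarrow> real" where
  "vol q m r = (if r < 0 then 0 else (\<Sum>i=0..nat r. real (m choose i) * (real q - 1) ^ i))"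

end

(* The code is taken inside the set S of words that begin with a marker 0^l c (c nonzero), are
   nonzero at position n - kappa and contain no run of l zeros strictly between the marker and
   that position. If a prefix of a in S of length at least kappa were a suffix of b in S, the
   nonzero symbol of b at position n - kappa would force the l zeros of the marker of a to
   appear in b before that position, either as a forbidden run or over the nonzero symbol of
   the marker of b; so S and all its subsets are kappa-WMU.

   A maximal subset of S with minimum distance d covers S by balls of radius d - 1, hence has at
   least |S| / D elements when every such ball contains at most D words of S. Around x in S, the
   marked words at distance less than d number at most L0; two explicit disjoint families of them
   lie outside S: words whose first run of l zeros after the marker starts at position i - 1 (L1)
   and words without such a run that vanish at position n - kappa (L2). Between the marker and
   the run, these words agree with x or carry a nonzero symbol, so they have no runs of zeros
   that x lacks. Finally |S| >= (q-1)^2 q^(n-l-2) - (n-kappa-2l) (q-1)^2 q^(n-2l-2), which the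
   choice q^l ~ 2 (n - kappa + 1) turns into c_q q^n / (n - kappa + 1). *)

theory Submission
  imports Defs "HOL-Library.Cardinality"
begin

lemma hamming_dist_conv_filter:
  "length a = length b \<Longrightarrow> hamming_dist a b = length (filter (\<lambda>(u, v). u \<noteq> v) (zip a b))"
  by (auto simp: hamming_dist_def length_filter_conv_card intro!: arg_cong[where f = card])

lemma hamming_dist_append:
  "length a = length b \<Longrightarrow> length c = length e \<Longrightarrow>
   hamming_dist (a @ c) (b @ e) = hamming_dist a b + hamming_dist c e"
  by (simp add: hamming_dist_conv_filter)

lemma hamming_dist_le_length: "hamming_dist a b \<le> length a"
  unfolding hamming_dist_def by (rule card_mono[of "{..<length a}", simplified]) auto

lemma hamming_dist_self [simp]: "hamming_dist a a = 0"
  by (simp add: hamming_dist_def)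

lemma hamming_dist_commute: "length a = length b \<Longrightarrow> hamming_dist a b = hamming_dist b a"
  unfolding hamming_dist_def by metis

lemma hamming_dist_Cons:
  "length c = length e \<Longrightarrow> hamming_dist (a # c) (b # e) = (if a = b then 0 else 1) + hamming_dist c e"
  by (simp add: hamming_dist_conv_filter)

lemma hamming_dist_split:
  "length x = length y + length z \<Longrightarrow>
   hamming_dist x (y @ z) = hamming_dist (take (length y) x) y + hamming_dist (drop (length y) x) z"
  using hamming_dist_append[of "take (length y) x" y "drop (length y) x" z] by simp

lemma hamming_dist_nth_split:
  assumes "length x = length y" "l < length x"
  shows "hamming_dist x y = hamming_dist (take l x) (take l y) + (if x ! l = y ! l then 0 else 1)
                            + hamming_dist (drop (Suc l) x) (drop (Suc l) y)"
  using hamming_dist_append[of "take l x" "take l y" "x ! l # drop (Suc l) x" "y ! l # drop (Suc l) y"]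
    id_take_nth_drop[of l x, symmetric] id_take_nth_drop[of l y, symmetric] assms
  by (simp add: hamming_dist_Cons)

lemma hamming_dist_append_le:
  "length x = length y + length z \<Longrightarrow> hamming_dist x (y @ z) \<le> length y + hamming_dist (drop (length y) x) z"
  using hamming_dist_split[of x y z] hamming_dist_le_length[of "take (length y) x" y] by simp

section \<open>Counting words\<close>

definition sphere_within :: "'a list \<Rightarrow> (nat \<Rightarrow> 'a set) \<Rightarrow> nat \<Rightarrow> 'a list set" where
  "sphere_within x A j =
     {y. length y = length x \<and> (\<forall>k<length x. y ! k = x ! k \<or> y ! k \<in> A k) \<and> hamming_dist x y = j}"

lemma Cons_mem_sphere_within:
  "s # ys \<in> sphere_within (t # xs) A j \<longleftrightarrow>
     (if s = t then ys \<in> sphere_within xs (A \<circ> Suc) j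
      else s \<in> A 0 \<and> 0 < j \<and> ys \<in> sphere_within xs (A \<circ> Suc) (j - 1))"
  by (auto simp: sphere_within_def hamming_dist_Cons All_less_Suc2)

lemma sphere_within_Cons:
  "sphere_within (t # xs) A j =
     Cons t ` sphere_within xs (A \<circ> Suc) j \<union>
     (if j = 0 then {}
      else (\<lambda>(s, ys). s # ys) ` ((A 0 - {t}) \<times> sphere_within xs (A \<circ> Suc) (j - 1)))"
  (is "?L = ?R")
proof (rule set_eqI)
  fix y show "y \<in> ?L \<longleftrightarrow> y \<in> ?R"
    by (cases y) (auto simp: Cons_mem_sphere_within, auto simp: sphere_within_def)
qed

lemma finite_sphere_within: "finite (sphere_within (x :: 'a::finite list) A j)"
  by (rule finite_subset[OF _ finite_lists_length_eq[of UNIV "length x"]]) (auto simp: sphere_within_def)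

lemma card_sphere_within:
  fixes x :: "'a::finite list"
  assumes "\<And>k. k < length x \<Longrightarrow> x ! k \<notin> A k \<and> card (A k) = a"
  shows "card (sphere_within x A j) = (length x choose j) * a ^ j"
  using assms
proof (induction x arbitrary: A j)
  case Nil
  have "sphere_within [] A j = (if j = 0 then {[]} else {})"
    by (auto simp: sphere_within_def hamming_dist_def)
  then show ?case by simp
next
  case (Cons t xs)
  have IH: "card (sphere_within xs (A \<circ> Suc) i) = (length xs choose i) * a ^ i" for i
    using Cons.prems[of "Suc _"] by (intro Cons.IH) auto
  have t: "t \<notin> A 0" "card (A 0) = a" using Cons.prems[of 0] by auto
  have cons_image: "card ((\<lambda>(s, ys). s # ys) ` B) = card B" for B :: "('a \<times> 'a list) set"
    by (rule card_image) (auto simp: inj_on_def)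
  show ?case
  proof (cases j)
    case 0
    then show ?thesis by (simp add: sphere_within_Cons card_image IH)
  next
    case (Suc i)
    have "card (sphere_within (t # xs) A j) =
          card (sphere_within xs (A \<circ> Suc) j) + card (A 0 \<times> sphere_within xs (A \<circ> Suc) i)"
      unfolding sphere_within_Cons Suc using t(1)
      by (subst card_Un_disjoint) (auto simp: finite_sphere_within card_image cons_image)
    also have "\<dots> = (length (t # xs) choose j) * a ^ j"
      by (simp add: IH card_cartesian_product t Suc algebra_simps)
    finally show ?thesis .
  qed
qed

definition hamming_ball :: "'a list \<Rightarrow> int \<Rightarrow> 'a list set" where
  "hamming_ball x r = {y. length y = length x \<and> int (hamming_dist x y) \<le> r}"

lemma finite_hamming_ball: "finite (hamming_ball (x :: 'a::finite list) r)"
  by (rule finite_subset[OF _ finite_lists_length_eq[of UNIV "length x"]]) (auto simp: hamming_ball_def)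

lemma card_hamming_ball:
  "real (card (hamming_ball (x :: 'a::finite list) r)) = vol CARD('a) (length x) r"
proof (cases "r < 0")
  case True
  then have "hamming_ball x r = {}" by (auto simp: hamming_ball_def)
  then show ?thesis using True by (simp add: vol_def)
next
  case False
  let ?A = "\<lambda>k. UNIV - {x ! k}"
  have "hamming_ball x r = (\<Union>i\<in>{0..nat r}. sphere_within x ?A i)"
    using False by (auto simp: hamming_ball_def sphere_within_def)
  then have "card (hamming_ball x r) = (\<Sum>i=0..nat r. card (sphere_within x ?A i))"
    by (auto intro!: card_UN_disjoint simp: finite_sphere_within, auto simp: sphere_within_def)
  also have "\<dots> = (\<Sum>i=0..nat r. (length x choose i) * (CARD('a) - 1) ^ i)"
    by (intro sum.cong refl card_sphere_within) (simp add: card_Diff_singleton)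
  finally show ?thesis
    using False by (simp add: vol_def Suc_leI)
qed

lemma card_lists_nth_in:
  "card {y. length y = m \<and> (\<forall>k<m. y ! k \<in> B k)} = (\<Prod>k<m. card (B k))"
proof (induction m arbitrary: B)
  case 0
  have "{y. length y = 0 \<and> (\<forall>k<0. y ! k \<in> B k)} = {[]}" by auto
  then show ?case by simp
next
  case (Suc m)
  have "{y. length y = Suc m \<and> (\<forall>k<Suc m. y ! k \<in> B k)} =
        (\<lambda>(s, ys). s # ys) ` (B 0 \<times> {y. length y = m \<and> (\<forall>k<m. y ! k \<in> B (Suc k))})"
    by (auto simp: All_less_Suc2 image_iff length_Suc_conv)
  then have "card {y. length y = Suc m \<and> (\<forall>k<Suc m. y ! k \<in> B k)} =
             card (B 0) * card {y. length y = m \<and> (\<forall>k<m. y ! k \<in> B (Suc k))}"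
    by (simp add: card_image inj_on_def card_cartesian_product)
  then show ?case by (simp only: Suc.IH prod.lessThan_Suc_shift)
qed

lemma card_words_zero_nonzero:
  assumes "Z \<subseteq> {..<n}" "N \<subseteq> {..<n}" "Z \<inter> N = {}"
  shows "card {y :: 'a::{zero,finite} list. length y = n \<and> (\<forall>k\<in>Z. y ! k = 0) \<and> (\<forall>k\<in>N. y ! k \<noteq> 0)}
           = (CARD('a) - 1) ^ card N * CARD('a) ^ (n - card Z - card N)"
proof -
  define B :: "nat \<Rightarrow> 'a set" where
    "B k = (if k \<in> Z then {0} else if k \<in> N then UNIV - {0} else UNIV)" for k
  have fin: "finite Z" "finite N" using assms finite_subset by blast+
  have "{y. length y = n \<and> (\<forall>k\<in>Z. y ! k = 0) \<and> (\<forall>k\<in>N. y ! k \<noteq> 0)} =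
        {y. length y = n \<and> (\<forall>k<n. y ! k \<in> B k)}"
    using assms by (auto simp: B_def)
  moreover have "(\<Prod>k<n. card (B k)) =
      (\<Prod>k\<in>{..<n} - (Z \<union> N). card (B k)) * ((\<Prod>k\<in>Z. card (B k)) * (\<Prod>k\<in>N. card (B k)))"
    using assms fin by (subst prod.subset_diff[of "Z \<union> N"]) (auto simp: prod.union_disjoint)
  moreover have "(\<Prod>k\<in>{..<n} - (Z \<union> N). card (B k)) = CARD('a) ^ (n - card Z - card N)"
  proof -
    have "card ({..<n} - (Z \<union> N)) = n - card Z - card N"
      using assms fin by (simp add: card_Diff_subset card_Un_disjoint)
    then show ?thesis by (simp add: B_def)
  qed
  moreover have "(\<Prod>k\<in>N. card (B k)) = (CARD('a) - 1) ^ card N"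
    using assms(3) by (subst prod.cong[OF refl, of N _ "\<lambda>_. CARD('a) - 1"]) (auto simp: B_def card_Diff_singleton)
  ultimately show ?thesis by (simp add: card_lists_nth_in B_def)
qed

lemma two_le_card_UNIV: "2 \<le> CARD('a::{zero_neq_one,finite})"
  using card_mono[of UNIV "{0::'a, 1}"] by simp

definition append_sets :: "'a list set \<Rightarrow> 'a list set \<Rightarrow> 'a list set" where
  "append_sets U V = {u @ v | u v. u \<in> U \<and> v \<in> V}"

lemma finite_append_sets: "finite U \<Longrightarrow> finite V \<Longrightarrow> finite (append_sets U V)"
proof -
  have "append_sets U V = (\<lambda>(u, v). u @ v) ` (U \<times> V)" by (auto simp: append_sets_def)
  then show "finite U \<Longrightarrow> finite V \<Longrightarrow> finite (append_sets U V)" by simp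
qed

lemma append_in_append_sets: "u \<in> U \<Longrightarrow> v \<in> V \<Longrightarrow> u @ v \<in> append_sets U V"
  by (auto simp: append_sets_def)

lemma card_append_sets:
  assumes "\<And>u. u \<in> U \<Longrightarrow> length u = m"
  shows "card (append_sets U V) = card U * card V"
proof -
  have "append_sets U V = (\<lambda>(u, v). u @ v) ` (U \<times> V)"
    by (auto simp: append_sets_def)
  moreover have "inj_on (\<lambda>(u, v). u @ v) (U \<times> V)"
    using assms by (auto simp: inj_on_def)
  ultimately show ?thesis by (simp add: card_image card_cartesian_product)
qed

lemma card_append_sets_singleton [simp]: "card (append_sets {u} V) = card V"
  using card_append_sets[of "{u}" "length u" V] by simp

lemma card_append_sets_letters [simp]: "card (append_sets ((\<lambda>c. [c]) ` A) V) = card A * card V"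
  by (subst card_append_sets[where m = 1]) (auto simp: card_image inj_on_def)

lemma card_Un3_le:
  assumes "finite M" "A \<subseteq> M" "B \<subseteq> M" "C \<subseteq> M" "A \<inter> B = {}" "A \<inter> C = {}" "B \<inter> C = {}"
  shows "card A + card B + card C \<le> card M"
proof -
  have fin: "finite A" "finite B" "finite C" using assms finite_subset by blast+
  then have "card A + card B + card C = card (A \<union> B \<union> C)"
    using assms(5-7) by (simp add: card_Un_disjoint Int_Un_distrib2)
  also have "\<dots> \<le> card M" using assms(1-4) by (intro card_mono) auto
  finally show ?thesis .
qed

section \<open>Greedy codes\<close>

lemma min_dist_ge_insert:
  assumes "min_dist_ge C d" "\<And>c. c \<in> C \<Longrightarrow> d \<le> hamming_dist c y" "\<And>c. c \<in> C \<Longrightarrow> length c = length y"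
  shows "min_dist_ge (insert y C) d"
  unfolding min_dist_ge_def
proof (intro ballI impI)
  fix b c assume "b \<in> insert y C" "c \<in> insert y C" "b \<noteq> c"
  then consider "b \<in> C" "c \<in> C" | "b = y" "c \<in> C" | "b \<in> C" "c = y" by auto
  then show "d \<le> hamming_dist b c"
  proof cases
    case 1
    then show ?thesis using assms(1) \<open>b \<noteq> c\<close> by (simp add: min_dist_ge_def)
  next
    case 2
    then show ?thesis using assms(2,3) hamming_dist_commute[of c y] by metis
  next
    case 3
    then show ?thesis using assms(2) by simp
  qed
qed

lemma exists_min_dist_cover:
  assumes "finite S" "\<And>y. y \<in> S \<Longrightarrow> length y = n" "0 < d"
  shows "\<exists>C\<subseteq>S. min_dist_ge C d \<and> S \<subseteq> (\<Union>c\<in>C. {y \<in> S. hamming_dist c y < d})"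
proof -
  let ?F = "{C. C \<subseteq> S \<and> min_dist_ge C d}"
  have "finite ?F" by (rule finite_subset[of _ "Pow S"]) (use assms(1) in auto)
  moreover have "{} \<in> ?F" by (simp add: min_dist_ge_def)
  ultimately have "\<exists>C\<in>?F. {} \<subseteq> C \<and> (\<forall>C'\<in>?F. C \<subseteq> C' \<longrightarrow> C = C')"
    by (rule finite_has_maximal2)
  then obtain C where C: "C \<subseteq> S" "min_dist_ge C d" and max: "\<forall>C'\<in>?F. C \<subseteq> C' \<longrightarrow> C = C'"
    by blast
  have "y \<in> (\<Union>c\<in>C. {y \<in> S. hamming_dist c y < d})" if y: "y \<in> S" for y
  proof (rule ccontr)
    assume "\<not> ?thesis"
    then have far: "\<And>c. c \<in> C \<Longrightarrow> d \<le> hamming_dist c y" using y by (auto simp: not_less)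
    then have "y \<notin> C" using \<open>0 < d\<close> by fastforce
    moreover have "min_dist_ge (insert y C) d"
      using C far assms(2) y by (intro min_dist_ge_insert) auto
    then have "C = insert y C" using max[rule_format, of "insert y C"] C y by auto
    ultimately show False by blast
  qed
  then show ?thesis using C by blast
qed

lemma gilbert_varshamov:
  fixes S :: "'a list set" and D a :: real
  assumes "finite S" "\<And>y. y \<in> S \<Longrightarrow> length y = n" "0 < d"
    and ball: "\<And>x. x \<in> S \<Longrightarrow> real (card {y \<in> S. hamming_dist x y < d}) \<le> D"
    and size: "0 < a" "a \<le> real (card S)"
  shows "\<exists>C\<subseteq>S. min_dist_ge C d \<and> a / D \<le> real (card C)"
proof -
  obtain C where C: "C \<subseteq> S" "min_dist_ge C d" and cover: "S \<subseteq> (\<Union>c\<in>C. {y \<in> S. hamming_dist c y < d})"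
    using exists_min_dist_cover[OF assms(1-3)] by blast
  have "card S \<le> card (\<Union>c\<in>C. {y \<in> S. hamming_dist c y < d})"
    by (rule card_mono[OF finite_subset[OF _ assms(1)] cover]) blast
  also have "\<dots> \<le> (\<Sum>c\<in>C. card {y \<in> S. hamming_dist c y < d})"
    by (rule card_UN_le) (rule finite_subset[OF C(1) assms(1)])
  finally have "real (card S) \<le> (\<Sum>c\<in>C. real (card {y \<in> S. hamming_dist c y < d}))"
    by (simp only: of_nat_le_iff of_nat_sum[symmetric])
  also have "\<dots> \<le> real (card C) * D"
    using sum_mono[of C "\<lambda>c. real (card {y \<in> S. hamming_dist c y < d})" "\<lambda>_. D"] ball C(1) by auto
  finally have "a \<le> real (card C) * D" using size by linarith
  moreover have "0 < D" using calculation size(1) mult_nonneg_nonpos[of "real (card C)" D] by fastforce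
  ultimately show ?thesis using C by (auto simp: divide_le_eq)
qed

section \<open>The candidate words\<close>

definition zero_run :: "nat \<Rightarrow> 'a::zero list \<Rightarrow> nat \<Rightarrow> bool" where
  "zero_run l y s \<longleftrightarrow> (\<forall>k<l. y ! (s + k) = 0)"

definition marked :: "nat \<Rightarrow> 'a::zero list \<Rightarrow> bool" where
  "marked l y \<longleftrightarrow> (\<forall>k<l. y ! k = 0) \<and> y ! l \<noteq> 0"

definition wmu_words :: "nat \<Rightarrow> nat \<Rightarrow> nat \<Rightarrow> 'a::zero list set" where
  "wmu_words n \<kappa> l = {y. length y = n \<and> marked l y \<and> y ! (n - \<kappa>) \<noteq> 0 \<and>
                          (\<forall>s. l < s \<and> s + l \<le> n - \<kappa> \<longrightarrow> \<not> zero_run l y s)}"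

lemma is_WMU_subset: "is_WMU \<kappa> n C \<Longrightarrow> C' \<subseteq> C \<Longrightarrow> is_WMU \<kappa> n C'"
  unfolding is_WMU_def by blast

lemma is_WMU_wmu_words:
  assumes "0 < \<kappa>"
  shows "is_WMU \<kappa> n (wmu_words n \<kappa> l :: 'a::zero list set)"
  unfolding is_WMU_def
proof (intro ballI allI impI notI)
  fix a b :: "'a list" and l' :: nat
  assume ab: "a \<in> wmu_words n \<kappa> l" "b \<in> wmu_words n \<kappa> l" and l': "\<kappa> \<le> l' \<and> l' < n"
    and overlap: "take l' a = drop (n - l') b"
  have a: "length a = n" "marked l a" and b: "length b = n" "marked l b" "b ! (n - \<kappa>) \<noteq> 0"
    "\<And>s. l < s \<Longrightarrow> s + l \<le> n - \<kappa> \<Longrightarrow> \<not> zero_run l b s"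
    using ab by (auto simp: wmu_words_def)
  have shift: "a ! k = b ! (n - l' + k)" if "k < l'" for k
    using arg_cong[OF overlap, of "\<lambda>w. w ! k"] that l' a b by simp
  have "a ! (l' - \<kappa>) \<noteq> 0" using shift[of "l' - \<kappa>"] b(3) l' assms by simp
  then have "l \<le> l' - \<kappa>" using a(2) by (meson marked_def not_le)
  then have run: "zero_run l b (n - l')"
    using shift a(2) l' assms by (auto simp: zero_run_def marked_def)
  show False
  proof (cases "l < n - l'")
    case True
    have "n - l' + l \<le> n - \<kappa>" using \<open>l \<le> l' - \<kappa>\<close> l' by linarith
    then show False using b(4)[OF True] run by simp
  next
    case False
    have k: "l - (n - l') < l" using l' False by linarith
    have "n - l' + (l - (n - l')) = l" using False by linarith
    then show False using run[unfolded zero_run_def, rule_format, OF k] b(2) by (simp add: marked_def)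
  qed
qed

lemma wmu_words_prefix:
  assumes "x \<in> wmu_words n \<kappa> l" "l < n"
  shows "length x = n" "take l x = replicate l 0" "x ! l \<noteq> 0"
  using assms by (auto simp: wmu_words_def marked_def intro!: nth_equalityI)

lemma marked_words_subset:
  "{y. length y = n \<and> (\<forall>k\<in>{..<l}. y ! k = 0) \<and> (\<forall>k\<in>{l, n - \<kappa>}. y ! k \<noteq> 0)} \<subseteq>
     wmu_words n \<kappa> l \<union> (\<Union>s\<in>{l<..n - \<kappa> - l}.
       {y. length y = n \<and> (\<forall>k\<in>{..<l} \<union> {s..<s + l}. y ! k = 0) \<and> (\<forall>k\<in>{l, n - \<kappa>}. y ! k \<noteq> 0)})"
    (is "?G \<subseteq> _ \<union> (\<Union>s\<in>_. ?B s)")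
proof
  fix y assume y: "y \<in> ?G"
  show "y \<in> wmu_words n \<kappa> l \<union> (\<Union>s\<in>{l<..n - \<kappa> - l}. ?B s)"
  proof (cases "y \<in> wmu_words n \<kappa> l")
    case False
    then obtain s where s: "l < s" "s + l \<le> n - \<kappa>" and run: "zero_run l y s"
      using y by (auto simp: wmu_words_def marked_def)
    have "y ! k = 0" if "k \<in> {s..<s + l}" for k
      using that run[unfolded zero_run_def, rule_format, of "k - s"] by (simp add: less_diff_conv2)
    then have "y \<in> ?B s" using y by auto
    then show ?thesis using s by auto
  qed simp
qed

lemma card_wmu_words_ge:
  fixes l \<kappa> n :: nat
  assumes "0 < \<kappa>" "l < n - \<kappa>"
  shows "(CARD('a) - 1)^2 * CARD('a)^(n - l - 2) \<le>
           card (wmu_words n \<kappa> l :: 'a::{zero,finite} list set)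
           + (n - \<kappa> - 2*l) * ((CARD('a) - 1)^2 * CARD('a)^(n - 2*l - 2))"
proof -
  let ?N = "{l, n - \<kappa>}"
  let ?words = "\<lambda>Z. {y :: 'a list. length y = n \<and> (\<forall>k\<in>Z. y ! k = 0) \<and> (\<forall>k\<in>?N. y ! k \<noteq> 0)}"
  let ?runs = "{l<..n - \<kappa> - l}"
  have N: "?N \<subseteq> {..<n}" "card ?N = 2" using assms by auto
  have "card (?words {..<l}) \<le> card (wmu_words n \<kappa> l \<union> (\<Union>s\<in>?runs. ?words ({..<l} \<union> {s..<s+l})))"
    by (rule card_mono[OF _ marked_words_subset])
       (auto intro: finite_subset[OF _ finite_lists_length_eq[of UNIV n]] simp: wmu_words_def)
  also have "\<dots> \<le> card (wmu_words n \<kappa> l :: 'a list set) + (\<Sum>s\<in>?runs. card (?words ({..<l} \<union> {s..<s+l})))"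
    by (rule order_trans[OF card_Un_le add_left_mono[OF card_UN_le]]) simp
  also have "(\<Sum>s\<in>?runs. card (?words ({..<l} \<union> {s..<s+l}))) = (n - \<kappa> - 2*l) * ((CARD('a) - 1)^2 * CARD('a)^(n - 2*l - 2))"
  proof -
    have "card (?words ({..<l} \<union> {s..<s+l})) = (CARD('a) - 1)^2 * CARD('a)^(n - 2*l - 2)" if s: "s \<in> ?runs" for s
    proof -
      have Z: "card ({..<l} \<union> {s..<s+l}) = 2 * l" using s by (subst card_Un_disjoint) auto
      have "{..<l} \<union> {s..<s+l} \<subseteq> {..<n}" "({..<l} \<union> {s..<s+l}) \<inter> ?N = {}"
        using assms s by auto
      from card_words_zero_nonzero[OF this(1) N(1) this(2)] show ?thesis
        by (simp only: Z N(2) diff_diff_left)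
    qed
    then show ?thesis by (simp add: mult_2 add.assoc)
  qed
  finally show ?thesis
    using card_words_zero_nonzero[where 'a='a, OF _ N(1), of "{..<l}"] N(2) assms by simp
qed

lemma window_square_bound:
  fixes q N W X :: real
  assumes "2 \<le> q" "1 \<le> N" "2 * N \<le> X" "X \<le> 2 * q * N" "0 \<le> W" "W \<le> N - 1"
  shows "(2 * q - 1) * X^2 \<le> 4 * q^2 * N * (X - W)"
proof -
  have "0 \<le> (2 * q - 1) * ((X - 2 * N) * (2 * q * N - X))"
    using assms by (intro mult_nonneg_nonneg) auto
  moreover have "0 \<le> (q - 1) * N * (2 * q * N - X)" "0 \<le> q^2 * N * (N - 1 - W)"
    using assms by simp_all
  moreover have "4 * q^2 * N * (X - W) - (2 * q - 1) * X^2 =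
      (2 * q - 1) * ((X - 2 * N) * (2 * q * N - X)) + 2 * ((q - 1) * N * (2 * q * N - X))
      + 4 * (q^2 * N * (N - 1 - W)) + 4 * (q^2 * N)"
    by (simp add: algebra_simps power2_eq_square)
  ultimately show ?thesis using assms by (smt (verit) mult_nonneg_nonneg zero_le_power2)
qed

lemma card_wmu_words_ge_real:
  fixes n \<kappa> l :: nat
  defines "q \<equiv> real CARD('a)" and "N \<equiv> real (n - \<kappa> + 1)"
  assumes \<kappa>: "0 < \<kappa>" and n: "2 * l + 1 + \<kappa> \<le> n" and X: "2 * N \<le> q ^ l" "q ^ l \<le> 2 * q * N"
  shows "(q - 1)^2 * (2 * q - 1) / (4 * q ^ 4) * q ^ n / N \<le>
           real (card (wmu_words n \<kappa> l :: 'a::{zero_neq_one,finite} list set))"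
proof -
  define P where "P = q ^ (n - 2 * l - 2)"
  define W where "W = real (n - \<kappa> - 2 * l)"
  have q: "2 \<le> q" using two_le_card_UNIV[where 'a='a] by (simp add: q_def)
  have N: "1 \<le> N" "0 \<le> W" "W \<le> N - 1" using n by (auto simp: N_def W_def)
  have "(CARD('a) - 1)^2 * CARD('a)^(n - l - 2) \<le> card (wmu_words n \<kappa> l :: 'a list set)
          + (n - \<kappa> - 2*l) * ((CARD('a) - 1)^2 * CARD('a)^(n - 2*l - 2))"
    using n \<kappa> by (intro card_wmu_words_ge) auto
  then have "real ((CARD('a) - 1)^2 * CARD('a)^(n - l - 2)) \<le> real (card (wmu_words n \<kappa> l :: 'a list set)
          + (n - \<kappa> - 2*l) * ((CARD('a) - 1)^2 * CARD('a)^(n - 2*l - 2)))"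
    by (simp only: of_nat_le_iff)
  moreover have "n - l - 2 = (n - 2 * l - 2) + l" using n \<kappa> by linarith
  ultimately have S: "(q - 1)^2 * (P * q ^ l) - W * ((q - 1)^2 * P) \<le> real (card (wmu_words n \<kappa> l :: 'a list set))"
    using q by (simp add: q_def P_def W_def power_add of_nat_diff)
  have "q ^ n = q ^ ((n - 2 * l - 2) + l + l + 2)" using n \<kappa> by (intro arg_cong[where f = "power q"]) linarith
  then have qn: "q ^ n = P * (q ^ l)^2 * q^2"
    unfolding P_def by (simp only: power_add power2_eq_square mult.assoc)
  have "(2 * q - 1) * (q ^ l)^2 / (4 * q^2 * N) \<le> q ^ l - W"
    using window_square_bound[OF q N(1) X N(2,3)] q N(1) by (simp add: divide_le_eq mult.commute)
  then have "(q - 1)^2 * P * ((2 * q - 1) * (q ^ l)^2 / (4 * q^2 * N)) \<le> (q - 1)^2 * P * (q ^ l - W)"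
    using q by (intro mult_left_mono) (auto simp: P_def)
  moreover have "(q - 1)^2 * (2 * q - 1) / (4 * q ^ 4) * q ^ n / N =
                 (q - 1)^2 * P * ((2 * q - 1) * (q ^ l)^2 / (4 * q^2 * N))"
    using q N(1) unfolding qn by (simp add: field_simps power2_eq_square power4_eq_xxxx)
  ultimately show ?thesis using S by (simp add: algebra_simps)
qed

section \<open>Candidate words close to a candidate word\<close>

lemma marked_ball_subset:
  fixes x :: "'a::zero list"
  assumes "marked l x" "l < length x"
  shows "{y. length y = length x \<and> marked l y \<and> hamming_dist x y < d} \<subseteq>
     append_sets {replicate l 0}
       (append_sets {[x ! l]} (hamming_ball (drop (Suc l) x) (int d - 1)) \<union>
        append_sets ((\<lambda>c. [c]) ` (UNIV - {0, x ! l})) (hamming_ball (drop (Suc l) x) (int d - 2)))"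
    (is "_ \<subseteq> append_sets _ ?R")
proof
  fix y assume y: "y \<in> {y. length y = length x \<and> marked l y \<and> hamming_dist x y < d}"
  have x0: "take l x = replicate l 0" and y0: "take l y = replicate l 0" "y ! l \<noteq> 0"
    using assms y by (auto simp: marked_def intro!: nth_equalityI)
  define w where "w = drop (Suc l) y"
  have w: "length w = length (drop (Suc l) x)" using y by (simp add: w_def)
  have dist: "hamming_dist x y = (if x ! l = y ! l then 0 else 1) + hamming_dist (drop (Suc l) x) w"
    using hamming_dist_nth_split[of x y l] x0 y0 y assms by (simp add: w_def)
  have "[y ! l] @ w \<in> ?R"
  proof (cases "y ! l = x ! l")
    case True
    then have "w \<in> hamming_ball (drop (Suc l) x) (int d - 1)"
      using y dist w by (simp add: hamming_ball_def)
    then show ?thesis using append_in_append_sets[of "[x ! l]" "{[x ! l]}" w] True by simp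
  next
    case False
    then have "w \<in> hamming_ball (drop (Suc l) x) (int d - 2)"
      using y dist w by (simp add: hamming_ball_def)
    moreover have "[y ! l] \<in> (\<lambda>c. [c]) ` (UNIV - {0, x ! l})" using False y0 by auto
    ultimately show ?thesis using append_in_append_sets[of "[y ! l]" _ w] by simp
  qed
  moreover have "y = replicate l 0 @ [y ! l] @ w"
    using y0 y assms id_take_nth_drop[of l y] by (simp add: w_def)
  ultimately show "y \<in> append_sets {replicate l 0} ?R"
    by (metis append_in_append_sets singletonI)
qed

lemma card_marked_ball_le:
  fixes x :: "'a::{zero,finite} list"
  assumes "marked l x" "l < length x"
  shows "real (card {y. length y = length x \<and> marked l y \<and> hamming_dist x y < d}) \<le>
           vol CARD('a) (length x - l - 1) (int d - 1)
           + (real CARD('a) - 2) * vol CARD('a) (length x - l - 1) (int d - 2)"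
proof -
  let ?B = "\<lambda>r. hamming_ball (drop (Suc l) x) r"
  let ?other = "UNIV - {0, x ! l}"
  have "card {y. length y = length x \<and> marked l y \<and> hamming_dist x y < d} \<le>
        card (append_sets {[x ! l]} (?B (int d - 1)) \<union> append_sets ((\<lambda>c. [c]) ` ?other) (?B (int d - 2)))"
    using card_mono[OF _ marked_ball_subset[OF assms]] by (simp add: finite_append_sets finite_hamming_ball)
  also have "\<dots> \<le> card (?B (int d - 1)) + card ?other * card (?B (int d - 2))"
    using card_Un_le[of "append_sets {[x ! l]} (?B (int d - 1))" "append_sets ((\<lambda>c. [c]) ` ?other) (?B (int d - 2))"]
    by simp
  finally have "real (card {y. length y = length x \<and> marked l y \<and> hamming_dist x y < d}) \<le>
                real (card (?B (int d - 1))) + real (card ?other) * real (card (?B (int d - 2)))"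
    by (simp only: of_nat_le_iff of_nat_add[symmetric] of_nat_mult[symmetric])
  moreover have "card ?other = CARD('a) - 2" "2 \<le> CARD('a)"
    using assms card_mono[of UNIV "{0, x ! l}"] by (auto simp: marked_def card_Diff_subset)
  ultimately show ?thesis
    using assms(2) by (simp add: card_hamming_ball of_nat_diff)
qed

(* For t = 0 the symbol 1 is excluded as well, so that all these sets have q - 2 elements. *)
definition alt_symbols :: "'a::{zero,one} \<Rightarrow> 'a set" where
  "alt_symbols t = (if t = 0 then UNIV - {0, 1} else UNIV - {0, t})"

definition alt_sphere :: "'a::{zero,one} list \<Rightarrow> nat \<Rightarrow> 'a list set" where
  "alt_sphere v j = sphere_within v (\<lambda>k. alt_symbols (v ! k)) j"

lemma card_alt_sphere:
  "card (alt_sphere (v :: 'a::{zero_neq_one,finite} list) j) = (length v choose j) * (CARD('a) - 2) ^ j"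
  unfolding alt_sphere_def by (rule card_sphere_within) (auto simp: alt_symbols_def card_Diff_subset)

lemma alt_sphereD:
  assumes "u \<in> alt_sphere v j"
  shows "length u = length v" "hamming_dist v u = j" "\<And>t. t < length v \<Longrightarrow> u ! t = 0 \<Longrightarrow> v ! t = 0"
  using assms by (auto simp: alt_sphere_def sphere_within_def alt_symbols_def split: if_splits)

lemma alt_extension:
  assumes x: "x \<in> wmu_words n \<kappa> l" and u: "u \<in> alt_sphere (take m (drop l x)) j"
    and m: "l + m \<le> n - \<kappa>" "l < n - \<kappa>" and y: "y = replicate l 0 @ u @ r"
  shows "length u = m" "take m (drop l y) = u" "0 < m \<Longrightarrow> y ! l \<noteq> 0"
    "\<And>s. l < s \<Longrightarrow> s + l \<le> l + m \<Longrightarrow> \<not> zero_run l y s"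
    "length r = n - l - m \<Longrightarrow> hamming_dist x y = j + hamming_dist (drop (l + m) x) r"
proof -
  have x0: "length x = n" "take l x = replicate l 0" "x ! l \<noteq> 0"
    using wmu_words_prefix[OF x] m by auto
  show lu: "length u = m" using alt_sphereD(1)[OF u] x0 m by simp
  then show "take m (drop l y) = u" using y by simp
  have zeros: "x ! (l + t) = 0" if "t < m" "u ! t = 0" for t
    using alt_sphereD(3)[OF u] that x0 m by simp
  show "y ! l \<noteq> 0" if "0 < m"
    using zeros[of 0] that x0 lu y by (auto simp: nth_append)
  show "\<not> zero_run l y s" if s: "l < s" "s + l \<le> l + m" for s
  proof
    assume run: "zero_run l y s"
    have "x ! (s + k) = 0" if k: "k < l" for k
    proof -
      have "y ! (s + k) = 0" using run k by (simp add: zero_run_def)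
      moreover have "s + k - l < m" using k s by linarith
      then have "y ! (s + k) = u ! (s + k - l)" using y lu s by (simp add: nth_append)
      ultimately show ?thesis using zeros[of "s + k - l"] k s by simp
    qed
    then have "zero_run l x s" by (simp add: zero_run_def)
    then show False using x s m by (auto simp: wmu_words_def)
  qed
  show "hamming_dist x y = j + hamming_dist (drop (l + m) x) r" if "length r = n - l - m"
    using hamming_dist_split[of x "replicate l 0" "u @ r"] hamming_dist_split[of "drop l x" u r]
      alt_sphereD(2)[OF u] x0 m lu that y
    by (simp add: add.commute)
qed

(* The words counted by the term L1: marked words close to x whose first run of l zeros after
   the marker starts at position i - 1. *)
definition run_words :: "nat \<Rightarrow> nat \<Rightarrow> 'a::{zero,one} list \<Rightarrow> nat \<Rightarrow> nat \<Rightarrow> 'a list set" where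
  "run_words l d x i j =
     append_sets {replicate l 0}
       (append_sets (alt_sphere (take (i - l - 2) (drop l x)) j)
         (append_sets ((\<lambda>c. [c]) ` (UNIV - {0}))
           (append_sets {replicate l 0} (hamming_ball (drop (i + l - 1) x) (int d - int l - int j - 2)))))"

(* The words counted by the term L2: marked words close to x without such runs that vanish at
   position n - kappa. *)
definition hole_words :: "nat \<Rightarrow> nat \<Rightarrow> nat \<Rightarrow> nat \<Rightarrow> 'a::{zero,one} list \<Rightarrow> nat \<Rightarrow> 'a list set" where
  "hole_words n \<kappa> l d x j =
     append_sets {replicate l 0}
       (append_sets (alt_sphere (take (n - \<kappa> - l) (drop l x)) j)
         (append_sets {[0]} (hamming_ball (drop (n - \<kappa> + 1) x) (int d - int j - 2))))"

lemma run_words_props: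
  assumes x: "x \<in> wmu_words n \<kappa> l" and i: "l + 2 \<le> i" "i + l \<le> n - \<kappa> + 1"
    and y: "y \<in> run_words l d x i j"
  shows "length y = n \<and> marked l y \<and> hamming_dist x y < d"
    "zero_run l y (i - 1)" "\<And>s. l < s \<Longrightarrow> s < i - 1 \<Longrightarrow> \<not> zero_run l y s"
    "hamming_dist (take (i - l - 2) (drop l x)) (take (i - l - 2) (drop l y)) = j"
proof -
  define m where "m = i - l - 2"
  obtain u c w where u: "u \<in> alt_sphere (take m (drop l x)) j" and c: "c \<noteq> 0"
    and w: "w \<in> hamming_ball (drop (i + l - 1) x) (int d - int l - int j - 2)"
    and yw: "y = replicate l 0 @ u @ ([c] @ replicate l 0 @ w)"
    using y unfolding run_words_def append_sets_def m_def by fastforce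
  have m: "l + m \<le> n - \<kappa>" "l < n - \<kappa>" using i by (simp_all add: m_def)
  note ext = alt_extension[OF x u m yw]
  have lx: "length x = n" using wmu_words_prefix[OF x] m by simp
  have im: "i + l - 1 = l + m + 1 + l" "i - 1 = l + m + 1" "l + m + 1 + l \<le> n"
    using i by (simp_all add: m_def)
  have lw: "length w = n - (l + m + 1 + l)" using w lx im by (simp add: hamming_ball_def)
  have yi: "y ! (l + m) = c" "zero_run l y (l + m + 1)"
    using yw ext(1) by (simp_all add: nth_append zero_run_def)
  show "zero_run l y (i - 1)" using yi im by simp
  show "\<not> zero_run l y s" if s: "l < s" "s < i - 1" for s
  proof (cases "s + l \<le> l + m")
    case False
    then have "y ! (s + (l + m - s)) = c" "l + m - s < l" using yi s im by simp_all
    then show ?thesis using c by (auto simp: zero_run_def)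
  qed (use ext(4) s in auto)
  have "y ! l \<noteq> 0" using ext(3) yi c by (cases "m = 0") auto
  moreover have "hamming_dist x y < d"
  proof -
    let ?x' = "drop (l + m) x"
    have "length ([c] @ replicate l 0 @ w) = n - l - m" using lw im by simp
    then have "hamming_dist x y = j + hamming_dist ?x' ([c] @ replicate l 0 @ w)" by (rule ext(5))
    also have "hamming_dist ?x' ([c] @ replicate l 0 @ w) \<le> 1 + hamming_dist (drop 1 ?x') (replicate l 0 @ w)"
      using hamming_dist_append_le[of ?x' "[c]"] lx lw im by simp
    also have "hamming_dist (drop 1 ?x') (replicate l 0 @ w) \<le> l + hamming_dist (drop (i + l - 1) x) w"
      using hamming_dist_append_le[of "drop 1 ?x'" "replicate l 0" w] lx lw m im by (simp add: add.commute)
    finally show ?thesis using w by (simp add: hamming_ball_def)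
  qed
  ultimately show "length y = n \<and> marked l y \<and> hamming_dist x y < d"
    using yw ext(1) lw im by (auto simp: marked_def nth_append)
  show "hamming_dist (take (i - l - 2) (drop l x)) (take (i - l - 2) (drop l y)) = j"
    using ext(2) alt_sphereD(2)[OF u] by (simp add: m_def)
qed

lemma hole_words_props:
  assumes x: "x \<in> wmu_words n \<kappa> l" and "0 < \<kappa>" "l < n - \<kappa>"
    and y: "y \<in> hole_words n \<kappa> l d x j"
  shows "length y = n \<and> marked l y \<and> hamming_dist x y < d"
    "y ! (n - \<kappa>) = 0" "\<And>s. l < s \<Longrightarrow> s + l \<le> n - \<kappa> \<Longrightarrow> \<not> zero_run l y s"
    "hamming_dist (take (n - \<kappa> - l) (drop l x)) (take (n - \<kappa> - l) (drop l y)) = j"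
proof -
  define m where "m = n - \<kappa> - l"
  obtain u w where u: "u \<in> alt_sphere (take m (drop l x)) j"
    and w: "w \<in> hamming_ball (drop (n - \<kappa> + 1) x) (int d - int j - 2)"
    and yw: "y = replicate l 0 @ u @ ([0] @ w)"
    using y unfolding hole_words_def append_sets_def m_def by fastforce
  have m: "l + m \<le> n - \<kappa>" "l < n - \<kappa>" "l + m = n - \<kappa>" "0 < m" using assms by (simp_all add: m_def)
  note ext = alt_extension[OF x u m(1,2) yw]
  have lx: "length x = n" using wmu_words_prefix[OF x] m by simp
  have lw: "length w = n - (l + m + 1)" using w lx m assms by (simp add: hamming_ball_def)
  have "y ! (l + m) = 0" using yw ext(1) by (simp add: nth_append)
  then show "y ! (n - \<kappa>) = 0" using m(3) by simp
  show "\<not> zero_run l y s" if "l < s" "s + l \<le> n - \<kappa>" for s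
    using ext(4) that m by simp
  have "hamming_dist x y < d"
  proof -
    have "length ([0] @ w) = n - l - m" using lw m assms by simp
    then have "hamming_dist x y = j + hamming_dist (drop (l + m) x) ([0] @ w)" by (rule ext(5))
    also have "\<dots> \<le> j + (1 + hamming_dist (drop (n - \<kappa> + 1) x) w)"
      using hamming_dist_append_le[of "drop (l + m) x" "[0]" w] lx lw m assms by simp
    finally show ?thesis using w by (simp add: hamming_ball_def)
  qed
  then show "length y = n \<and> marked l y \<and> hamming_dist x y < d"
    using yw ext(1,3) lw m assms by (auto simp: marked_def nth_append)
  show "hamming_dist (take (n - \<kappa> - l) (drop l x)) (take (n - \<kappa> - l) (drop l y)) = j"
    using ext(2) alt_sphereD(2)[OF u] by (simp add: m_def)
qed

lemma card_run_words:
  fixes x :: "'a::{zero_neq_one,finite} list"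
  assumes "x \<in> wmu_words n \<kappa> l" "0 < \<kappa>" "l + 2 \<le> i" "i + l \<le> n - \<kappa> + 1"
  shows "real (card (run_words l d x i j)) = (real CARD('a) - 1) *
           (real ((i - l - 2) choose j) * (real CARD('a) - 2) ^ j *
            vol CARD('a) (n - i - l + 1) (int d - int l - int j - 2))"
proof -
  have lx: "length x = n" using wmu_words_prefix assms by fastforce
  have "card (run_words l d x i j) = card (alt_sphere (take (i - l - 2) (drop l x)) j) *
          (card (UNIV - {0::'a}) * card (hamming_ball (drop (i + l - 1) x) (int d - int l - int j - 2)))"
    unfolding run_words_def card_append_sets_singleton using assms lx
    by (subst card_append_sets[where m = "i - l - 2"]) (auto dest: alt_sphereD(1))
  moreover have "length (drop (i + l - 1) x) = n - i - l + 1" using lx assms by simp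
  ultimately show ?thesis
    using two_le_card_UNIV[where 'a='a] lx assms
    by (simp add: card_alt_sphere card_hamming_ball card_Diff_singleton of_nat_diff)
qed

lemma card_hole_words:
  fixes x :: "'a::{zero_neq_one,finite} list"
  assumes "x \<in> wmu_words n \<kappa> l" "0 < \<kappa>" "l < n - \<kappa>"
  shows "real (card (hole_words n \<kappa> l d x j)) =
           real ((n - \<kappa> - l) choose j) * (real CARD('a) - 2) ^ j * vol CARD('a) (\<kappa> - 1) (int d - int j - 2)"
proof -
  have lx: "length x = n" using wmu_words_prefix assms by fastforce
  have "card (hole_words n \<kappa> l d x j) = card (alt_sphere (take (n - \<kappa> - l) (drop l x)) j) *
          card (hamming_ball (drop (n - \<kappa> + 1) x) (int d - int j - 2))"
    unfolding hole_words_def card_append_sets_singleton using assms lx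
    by (subst card_append_sets[where m = "n - \<kappa> - l"]) (auto dest: alt_sphereD(1))
  moreover have "length (drop (n - \<kappa> + 1) x) = \<kappa> - 1" using lx assms by simp
  ultimately show ?thesis
    using two_le_card_UNIV[where 'a='a] lx assms
    by (simp add: card_alt_sphere card_hamming_ball of_nat_diff)
qed

lemma card_run_family:
  fixes x :: "'a::{zero_neq_one,finite} list"
  assumes x: "x \<in> wmu_words n \<kappa> l" and "0 < \<kappa>" "l < n - \<kappa>"
  shows "real (card (\<Union>(i, j)\<in>Sigma {l + 2..n - \<kappa> - l + 1} (\<lambda>i. {0..i - l - 2}). run_words l d x i j)) =
    (real CARD('a) - 1) * (\<Sum>i = l + 2..n - \<kappa> - l + 1. \<Sum>j = 0..i - l - 2.
      real ((i - l - 2) choose j) * (real CARD('a) - 2) ^ j * vol CARD('a) (n - i - l + 1) (int d - int l - int j - 2))"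
proof -
  let ?I = "Sigma {l + 2..n - \<kappa> - l + 1} (\<lambda>i. {0..i - l - 2})"
  have range: "l + 2 \<le> i" "i + l \<le> n - \<kappa> + 1" if "(i, j) \<in> ?I" for i j
    using that assms by auto
  have fin: "finite (run_words l d x i j)" for i j
    by (simp add: run_words_def alt_sphere_def finite_append_sets finite_hamming_ball finite_sphere_within)
  have disj: "run_words l d x i j \<inter> run_words l d x i' j' = {}"
    if "(i, j) \<in> ?I" "(i', j') \<in> ?I" "(i, j) \<noteq> (i', j')" for i j i' j'
  proof (rule ccontr)
    assume "run_words l d x i j \<inter> run_words l d x i' j' \<noteq> {}"
    then obtain y where y: "y \<in> run_words l d x i j" "y \<in> run_words l d x i' j'" by blast
    note P = run_words_props[OF x range[OF that(1)] y(1)] and P' = run_words_props[OF x range[OF that(2)] y(2)]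
    have "\<not> i < i'"
    proof
      assume "i < i'"
      then have "l < i - 1" "i - 1 < i' - 1" using range[OF that(1)] by linarith+
      then show False using P(2) P'(3) by blast
    qed
    moreover have "\<not> i' < i"
    proof
      assume "i' < i"
      then have "l < i' - 1" "i' - 1 < i - 1" using range[OF that(2)] by linarith+
      then show False using P'(2) P(3) by blast
    qed
    ultimately show False using P(4) P'(4) that(3) by auto
  qed
  have "card (\<Union>(i, j)\<in>?I. run_words l d x i j) = (\<Sum>p\<in>?I. card (case p of (i, j) \<Rightarrow> run_words l d x i j))"
    by (rule card_UN_disjoint) (use fin disj in auto)
  then have "real (card (\<Union>(i, j)\<in>?I. run_words l d x i j)) =
      (\<Sum>i = l + 2..n - \<kappa> - l + 1. \<Sum>j = 0..i - l - 2. real (card (run_words l d x i j)))"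
    by (subst sum.Sigma) (auto simp only: of_nat_sum split_def finite_atLeastAtMost)
  also have "\<dots> = (\<Sum>i = l + 2..n - \<kappa> - l + 1. \<Sum>j = 0..i - l - 2. (real CARD('a) - 1) *
      (real ((i - l - 2) choose j) * (real CARD('a) - 2) ^ j * vol CARD('a) (n - i - l + 1) (int d - int l - int j - 2)))"
    using assms by (intro sum.cong refl card_run_words) auto
  finally show ?thesis by (simp only: sum_distrib_left)
qed

lemma card_hole_family:
  fixes x :: "'a::{zero_neq_one,finite} list"
  assumes x: "x \<in> wmu_words n \<kappa> l" and "0 < \<kappa>" "l < n - \<kappa>"
  shows "real (card (\<Union>j\<in>{0..n - \<kappa> - l}. hole_words n \<kappa> l d x j)) =
    (\<Sum>j = 0..n - \<kappa> - l. real ((n - \<kappa> - l) choose j) * (real CARD('a) - 2) ^ j * vol CARD('a) (\<kappa> - 1) (int d - int j - 2))"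
proof -
  have fin: "finite (hole_words n \<kappa> l d x j)" for j
    by (simp add: hole_words_def alt_sphere_def finite_append_sets finite_hamming_ball finite_sphere_within)
  have disj: "hole_words n \<kappa> l d x j \<inter> hole_words n \<kappa> l d x j' = {}" if "j \<noteq> j'" for j j'
    using hole_words_props(4)[OF assms] that by blast
  have "card (\<Union>j\<in>{0..n - \<kappa> - l}. hole_words n \<kappa> l d x j) = (\<Sum>j = 0..n - \<kappa> - l. card (hole_words n \<kappa> l d x j))"
    by (rule card_UN_disjoint) (use fin disj in auto)
  then show ?thesis using card_hole_words[OF assms] by simp
qed

(* The denominator L0 - L1 - L2 of the statement, without the factor n - kappa + 1. *)
definition close_bound :: "nat \<Rightarrow> nat \<Rightarrow> nat \<Rightarrow> nat \<Rightarrow> nat \<Rightarrow> real" where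
  "close_bound q n \<kappa> l d =
     (vol q (n - l - 1) (int d - 1) + (real q - 2) * vol q (n - l - 1) (int d - 2))
     - (real q - 1) * (\<Sum>i = l + 2..n - \<kappa> - l + 1. \<Sum>j = 0..i - l - 2.
           real ((i - l - 2) choose j) * (real q - 2) ^ j *
           vol q (n - i - l + 1) (int d - int l - int j - 2))
     - (\<Sum>i = 0..n - \<kappa> - l.
           real ((n - \<kappa> - l) choose i) * (real q - 2) ^ i * vol q (\<kappa> - 1) (int d - int i - 2))"

lemma card_close_wmu_words_le:
  fixes x :: "'a::{zero_neq_one,finite} list"
  assumes x: "x \<in> wmu_words n \<kappa> l" and "0 < \<kappa>" "l < n - \<kappa>"
  shows "real (card {y \<in> wmu_words n \<kappa> l. hamming_dist x y < d}) \<le> close_bound CARD('a) n \<kappa> l d"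
proof -
  let ?C = "{y \<in> wmu_words n \<kappa> l. hamming_dist x y < d}"
  let ?R = "\<Union>(i, j)\<in>Sigma {l + 2..n - \<kappa> - l + 1} (\<lambda>i. {0..i - l - 2}). run_words l d x i j"
  let ?H = "\<Union>j\<in>{0..n - \<kappa> - l}. hole_words n \<kappa> l d x j"
  let ?M = "{y. length y = n \<and> marked l y \<and> hamming_dist x y < d}"
  have lx: "length x = n" "marked l x" using x by (auto simp: wmu_words_def)
  have range: "l + 2 \<le> i" "i + l \<le> n - \<kappa> + 1" if "i \<in> {l + 2..n - \<kappa> - l + 1}" for i
    using that assms by auto
  have run_family: "y \<in> ?M \<and> (\<exists>s. l < s \<and> s + l \<le> n - \<kappa> \<and> zero_run l y s)" if "y \<in> ?R" for y
  proof -
    obtain i j where i: "i \<in> {l + 2..n - \<kappa> - l + 1}" and y: "y \<in> run_words l d x i j"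
      using \<open>y \<in> ?R\<close> by auto
    have "l < i - 1" "i - 1 + l \<le> n - \<kappa>" using range[OF i] by linarith+
    with run_words_props(1,2)[OF x range[OF i] y] show ?thesis by blast
  qed
  have "finite ?M" by (rule finite_subset[OF _ finite_lists_length_eq[of UNIV n]]) auto
  moreover have "?C \<subseteq> ?M" by (auto simp: wmu_words_def)
  moreover have "?R \<subseteq> ?M" using run_family by blast
  moreover have "?H \<subseteq> ?M" using hole_words_props(1)[OF assms(1-3)] by blast
  moreover have "?C \<inter> ?R = {}" using run_family by (auto simp: wmu_words_def)
  moreover have "?C \<inter> ?H = {}" using hole_words_props(2)[OF assms(1-3)] by (auto simp: wmu_words_def)
  moreover have "?R \<inter> ?H = {}" using run_family hole_words_props(3)[OF assms(1-3)] by blast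
  ultimately have "card ?C + card ?R + card ?H \<le> card ?M" by (rule card_Un3_le)
  then have "real (card ?C) + real (card ?R) + real (card ?H) \<le> real (card ?M)"
    by (simp only: of_nat_add[symmetric] of_nat_le_iff)
  moreover have "real (card ?M) \<le> vol CARD('a) (n - l - 1) (int d - 1)
                                   + (real CARD('a) - 2) * vol CARD('a) (n - l - 1) (int d - 2)"
    using card_marked_ball_le[of l x d] lx assms(3) by simp
  ultimately show ?thesis
    using card_run_family[OF assms(1-3), of d] card_hole_family[OF assms(1-3), of d]
    unfolding close_bound_def by linarith
qed

lemma ceiling_log_bounds:
  fixes b y :: real
  assumes "1 < b" "1 < y" "l = nat \<lceil>log b y\<rceil>"
  shows "1 \<le> l" "y \<le> b ^ l" "b ^ l \<le> b * y"
proof -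
  have pos: "0 < log b y" using assms by simp
  then have l: "real l = of_int \<lceil>log b y\<rceil>" using assms(3) by simp
  then show "1 \<le> l" using pos by linarith
  have e: "b powr real l = b ^ l" using assms(1) by (simp add: powr_realpow)
  have "log b y \<le> real l" using l by simp
  then have "b powr log b y \<le> b powr real l" using assms(1) by simp
  then show "y \<le> b ^ l" using assms(1,2) e by simp
  have "real l \<le> log b y + 1" using l by simp
  then have "b powr real l \<le> b powr (log b y + 1)" using assms(1) by simp
  then show "b ^ l \<le> b * y" using assms(1,2) e by (simp add: powr_add mult.commute)
qed

theorem theorem4:
  fixes q n \<kappa> d l :: nat
  assumes "card (UNIV :: 'a::{field,finite} set) = q"
    and "q \<in> {2, 4}"
    and "1 \<le> \<kappa>" "\<kappa> < n" "0 < d"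
    and "l = nat \<lceil>log (real q) (2 * real (n - \<kappa> + 1))\<rceil>"
    and "n - \<kappa> - 1 \<ge> 2 * l"
  shows "\<exists>C :: 'a list set. C \<subseteq> {w. length w = n} \<and> is_WMU \<kappa> n C \<and> min_dist_ge C d \<and>
     real (card C) \<ge>
       ((real q - 1)^2 * (2 * real q - 1) / (4 * real q ^ 4)) * real q ^ n /
       (real (n - \<kappa> + 1) *
         ( (vol q (n - l - 1) (int d - 1) + (real q - 2) * vol q (n - l - 1) (int d - 2))
         - (real q - 1) * (\<Sum>i = l + 2..n - \<kappa> - l + 1. \<Sum>j = 0..i - l - 2.
               real ((i - l - 2) choose j) * (real q - 2) ^ j *
               vol q (n - i - l + 1) (int d - int l - int j - 2))
         - (\<Sum>i = 0..n - \<kappa> - l.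
               real ((n - \<kappa> - l) choose i) * (real q - 2) ^ i * vol q (\<kappa> - 1) (int d - int i - 2))))"
proof -
  let ?S = "wmu_words n \<kappa> l :: 'a list set"
  let ?size = "(real q - 1)^2 * (2 * real q - 1) / (4 * real q ^ 4) * real q ^ n / real (n - \<kappa> + 1)"
  have q: "2 \<le> q" using two_le_card_UNIV[where 'a='a] assms(1) by simp
  have l: "2 * real (n - \<kappa> + 1) \<le> real q ^ l" "real q ^ l \<le> 2 * real q * real (n - \<kappa> + 1)"
    using ceiling_log_bounds[of "real q" "2 * real (n - \<kappa> + 1)" l] q assms(6) by (simp_all add: mult_ac)
  have n: "2 * l + 1 + \<kappa> \<le> n" using assms(3,4,7) by linarith
  have "\<exists>C\<subseteq>?S. min_dist_ge C d \<and> ?size / close_bound q n \<kappa> l d \<le> real (card C)"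
  proof (rule gilbert_varshamov)
    show "finite ?S" by (rule finite_subset[OF _ finite_lists_length_eq[of UNIV n]]) (auto simp: wmu_words_def)
    show "real (card {y \<in> ?S. hamming_dist x y < d}) \<le> close_bound q n \<kappa> l d" if "x \<in> ?S" for x
      using card_close_wmu_words_le[OF that] assms(1,3) n by simp
    show "?size \<le> real (card ?S)" using card_wmu_words_ge_real[where 'a='a, OF _ n] l assms(1,3) by simp
    show "0 < ?size" using q by simp
  qed (use assms(5) in \<open>simp_all add: wmu_words_def\<close>)
  then obtain C where C: "C \<subseteq> ?S" "min_dist_ge C d" "?size / close_bound q n \<kappa> l d \<le> real (card C)"
    by blast
  moreover have "is_WMU \<kappa> n C" using is_WMU_subset[OF is_WMU_wmu_words C(1)] assms(3) by simp
  moreover have "C \<subseteq> {w. length w = n}" using C(1) by (auto simp: wmu_words_def)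
  ultimately show ?thesis unfolding close_bound_def by (intro exI[of _ C]) (simp add: divide_divide_eq_left)
qed

end
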